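(* Let $\langle l,m\rangle$ be a type. The number of strict equivalence classes of surjective characters $U_1\to\mathbb{Z}/p^2\mathbb{Z}$ of type $\langle l,m\rangle$ is at most $$B(p,l,m)=p^k(p-1)^{\epsilon},$$ where $k$ is the number of integers in $[m-l,m-1]$ not divisible by $p$, and $\epsilon=1$ if $p\mid m$ and $\epsilon=2$ otherwise. (Here $B(p,l,m)$ is the number of reduced forms $x_l\mathfrak{Z}_l+\sum_{m-l\le j\le m,\,p\nmid j}b_j\cdot p\,\mathfrak{Z}_j$ with $x_l\in\{1,\dots,p-1\}$, $b_j\in\{0,\dots,p-1\}$, and $b_m\in\{1,\dots,p-1\}$ when $p\nmid m$.)
   Context: Let $p$ be a prime, $U_1=1+t\mathbb{F}_p[[t]]$, $U_j=1+t^j\mathbb{F}_p[[t]]$, with the $t$-adic topology. The Nottingham group $\mathcal{N}$ over $\mathbb{F}_p$ is the set of power series $u(t)=t(1+c_1t+\cdots)$, $c_i\in\mathbb{F}_p$, under composition. A character is a continuous homomorphism $\chi:U_1\to\mathbb{Z}/p^2\mathbb{Z}$; $\mathcal{N}$ acts by ${}_u\chi(f(t))=\chi(f(u(t)))$. Characters $\chi,\psi$ are strictly equivalent if $\psi={}_u\chi$ for some $u\in\mathcal{N}$ with $\chi(u(t)/t)=0$. A surjective character has type $\langle l,m\rangle$ where $l$ is the largest $b$ with $\chi(U_b)\not\subset p\mathbb{Z}/p^2\mathbb{Z}$ and $m$ the largest $b$ with $\chi(U_b)\ne0$. Put $E_j=1+t^j$; the $E_j$ with $p\nmid j$ form a topological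 $\mathbb{Z}_p$-basis of $U_1$, and for $p\nmid j$, $\mathfrak{Z}_j$ is the character with $\mathfrak{Z}_j(E_i)=\delta_{ij}$ for $p\nmid i$. *)

theory Defs
  imports "HOL-Computational_Algebra.Formal_Power_Series" "HOL-Computational_Algebra.Primes"
begin

text \<open>The base field F_p is modelled by a finite field type 'a with CARD('a) = p (p prime).
  Power series over F_p are elements of 'a fps; t is fps_X.\<close>

definition Uj :: "nat \<Rightarrow> ('a::field) fps set" where
  "Uj j = {f. fps_nth f 0 = 1 \<and> (\<forall>i. 0 < i \<and> i < j \<longrightarrow> fps_nth f i = 0)}"

definition nottingham :: "('a::field) fps set" where
  "nottingham = {u. fps_nth u 0 = 0 \<and> fps_nth u 1 = 1}"

text \<open>Characters U_1 -> Z/p^2Z, values represented in {0..<p^2}; extensional (0 off U_1).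
  Continuity for the t-adic topology with discrete target = local constancy.\<close>
definition is_character :: "nat \<Rightarrow> (('a::field) fps \<Rightarrow> int) \<Rightarrow> bool" where
  "is_character p \<chi> \<longleftrightarrow>
     (\<forall>f. f \<notin> Uj 1 \<longrightarrow> \<chi> f = 0) \<and>
     (\<forall>f\<in>Uj 1. 0 \<le> \<chi> f \<and> \<chi> f < int p ^ 2) \<and>
     (\<forall>f\<in>Uj 1. \<forall>g\<in>Uj 1. \<chi> (f * g) = (\<chi> f + \<chi> g) mod (int p ^ 2)) \<and>
     (\<forall>f\<in>Uj 1. \<exists>j. \<forall>g\<in>Uj 1. (\<forall>i<j. fps_nth g i = fps_nth f i) \<longrightarrow> \<chi> g = \<chi> f)"

definition surjective_character :: "nat \<Rightarrow> (('a::field) fps \<Rightarrow> int) \<Rightarrow> bool" where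
  "surjective_character p \<chi> \<longleftrightarrow> is_character p \<chi> \<and> \<chi> ` Uj 1 = {0..<int p ^ 2}"

definition act :: "('a::field) fps \<Rightarrow> ('a fps \<Rightarrow> int) \<Rightarrow> ('a fps \<Rightarrow> int)" where
  "act u \<chi> = (\<lambda>f. if f \<in> Uj 1 then \<chi> (f oo u) else 0)"

definition strictly_equiv :: "(('a::field) fps \<Rightarrow> int) \<Rightarrow> ('a fps \<Rightarrow> int) \<Rightarrow> bool" where
  "strictly_equiv \<chi> \<psi> \<longleftrightarrow> (\<exists>u\<in>nottingham. \<chi> (fps_shift 1 u) = 0 \<and> \<psi> = act u \<chi>)"

definition has_type :: "nat \<Rightarrow> (('a::field) fps \<Rightarrow> int) \<Rightarrow> nat \<Rightarrow> nat \<Rightarrow> bool" where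
  "has_type p \<chi> l m \<longleftrightarrow>
     l \<ge> 1 \<and> (\<exists>f\<in>Uj l. \<not> int p dvd \<chi> f) \<and> (\<forall>b>l. \<forall>f\<in>Uj b. int p dvd \<chi> f) \<and>
     m \<ge> 1 \<and> (\<exists>f\<in>Uj m. \<chi> f \<noteq> 0) \<and> (\<forall>b>m. \<forall>f\<in>Uj b. \<chi> f = 0)"

definition surj_chars_of_type :: "nat \<Rightarrow> nat \<Rightarrow> nat \<Rightarrow> (('a::field) fps \<Rightarrow> int) set" where
  "surj_chars_of_type p l m = {\<chi>. surjective_character p \<chi> \<and> has_type p \<chi> l m}"

definition bound_B :: "nat \<Rightarrow> nat \<Rightarrow> nat \<Rightarrow> nat" where
  "bound_B p l m = p ^ card {j \<in> {m - l..m - 1}. \<not> p dvd j} * (p - 1) ^ (if p dvd m then 1 else 2)"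

end

theory Submission
  imports Defs "HOL-Number_Theory.Residues" "HOL-Library.FuncSet"
begin

text \<open>Substituting \<open>t h\<close> for \<open>t\<close>, where \<open>h \<in> U\<^sub>k\<close> and \<open>\<chi>(h) = 0\<close>, is a strict equivalence; it
  changes \<open>\<chi>(E\<^sub>i)\<close> by \<open>n \<chi>(E\<^sub>i\<^sub>+\<^sub>k)\<close> with \<open>n \<equiv> i h\<^sub>k (mod p)\<close>, up to values on \<open>U\<^sub>i\<^sub>+\<^sub>k\<^sub>+\<^sub>1\<close>.
  Since \<open>\<chi>(E\<^sub>l)\<close> is a unit, this clears, in descending order of \<open>j\<close>, the unit part of \<open>\<chi>(E\<^sub>j)\<close>
  for \<open>j < l\<close>; since \<open>\<chi>(E\<^sub>m)\<close> is \<open>p\<close> times a unit, it then clears the \<open>p\<close>-part of \<open>\<chi>(E\<^sub>j)\<close>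
  for \<open>j < m - l\<close>. As \<open>E\<^sub>p\<^sub>i = E\<^sub>i\<^sup>p\<close> and \<open>\<chi>\<close> is trivial on \<open>U\<^sub>m\<^sub>+\<^sub>1\<close>, a character is determined
  by its values on the \<open>E\<^sub>j\<close> with \<open>j \<le> m\<close>, \<open>p \<nmid> j\<close>; so distinct classes have distinct tuples of
  reduced values, and there are at most \<open>B(p, l, m)\<close> such tuples.\<close>

unbundle fps_syntax

lemma exists_nat_dvd_add_mult:
  fixes a t :: int
  assumes "prime p" "\<not> int p dvd a"
  shows "\<exists>n::nat. int p ^ e dvd t + int n * a"
proof -
  have "coprime (int p) a"
    using assms by (intro prime_imp_coprime) auto
  then have "coprime a (int p ^ e)"
    by (simp add: coprime_commute)
  then obtain x where x: "[a * x = 1] (mod int p ^ e)"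
    using cong_solve_coprime_int by blast
  define n where "n = nat ((- t * x) mod int p ^ e)"
  have "int n = (- t * x) mod int p ^ e"
    using assms(1) by (simp add: n_def prime_gt_0_nat)
  then have "[t + int n * a = t + (- t * x) * a] (mod int p ^ e)"
    by (intro cong_add cong_mult) (auto simp: cong_def)
  also have "[t + (- t * x) * a = t + (- t) * 1] (mod int p ^ e)"
    using x by (intro cong_add cong_refl) (metis cong_scalar_left mult.assoc mult.commute)
  finally show ?thesis
    by (auto simp: cong_0_iff)
qed

lemma exists_nat_square_dvd_add_mult:
  fixes a e :: int
  assumes "prime p" "int p dvd a" "\<not> int p dvd e"
  shows "\<exists>n::nat. int p ^ 2 dvd a + int n * (int p * e)"
proof -
  obtain t where t: "a = int p * t"
    using assms(2) by blast
  obtain n where n: "int p dvd t + int n * e"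
    using exists_nat_dvd_add_mult[OF assms(1,3), where e = 1] by auto
  have "a + int n * (int p * e) = int p * (t + int n * e)"
    by (simp add: t algebra_simps)
  then have "int p * int p dvd a + int n * (int p * e)"
    using mult_dvd_mono[OF dvd_refl n, of "int p"] by simp
  then show ?thesis
    by (auto simp: power2_eq_square)
qed

lemma dvd_add_mod_square_diff:
  fixes a b q :: int
  assumes "q dvd b"
  shows "q dvd (a + b) mod q ^ 2 - a"
proof -
  have "(a + b) mod q ^ 2 mod q = (a + b) mod q"
    by (simp add: mod_mod_cancel)
  then have "q dvd (a + b) mod q ^ 2 - (a + b)"
    by (simp only: mod_eq_dvd_iff)
  then show ?thesis
    using dvd_add[OF _ assms] by fastforce
qed

lemma mod_square_add_mult_eq_mod:
  fixes v n c e q :: int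
  assumes "0 < q" "q dvd v div q + c * e" "q dvd n - c"
  shows "(v + n * (q * e)) mod q ^ 2 = v mod q"
proof -
  have "q dvd v div q + n * e"
    using dvd_add[OF assms(2) dvd_mult2[OF assms(3), of e]] by (simp add: algebra_simps)
  then obtain t where t: "v div q + n * e = q * t"
    by blast
  have "v + n * (q * e) = v mod q + q * (v div q + n * e)"
    by (simp add: algebra_simps)
  also have "\<dots> = v mod q + q ^ 2 * t"
    by (simp add: t power2_eq_square)
  finally have "(v + n * (q * e)) mod q ^ 2 = (v mod q) mod q ^ 2"
    by simp
  also have "\<dots> = v mod q"
    using assms(1) by (intro mod_pos_pos_trivial) (auto simp: power2_eq_square
        intro: order.strict_trans2[OF pos_mod_bound])
  finally show ?thesis .
qed

lemma descending_normalization: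
  fixes n :: nat
  assumes refl: "\<And>x. I x \<Longrightarrow> R x x"
    and trans: "\<And>x y z. I x \<Longrightarrow> R x y \<Longrightarrow> R y z \<Longrightarrow> R x z"
    and improve: "\<And>x j. I x \<Longrightarrow> j < n \<Longrightarrow> \<exists>y. R x y \<and> I y \<and> Q j y \<and> (\<forall>i>j. Q i x \<longrightarrow> Q i y)"
    and "I x"
  shows "\<exists>y. R x y \<and> I y \<and> (\<forall>j<n. Q j y)"
proof -
  have "\<exists>y. R x y \<and> I y \<and> (\<forall>j. k \<le> j \<and> j < n \<longrightarrow> Q j y)" if "k \<le> n" for k
    using that
  proof (induction k rule: inc_induct)
    case base
    show ?case
      using refl[OF \<open>I x\<close>] \<open>I x\<close> by auto
  next
    case (step k)
    then obtain y where y: "R x y" "I y" "\<forall>j. Suc k \<le> j \<and> j < n \<longrightarrow> Q j y"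
      by blast
    obtain z where z: "R y z" "I z" "Q k z" "\<forall>i>k. Q i y \<longrightarrow> Q i z"
      using improve[OF y(2) step(2)] by blast
    have "\<forall>j. k \<le> j \<and> j < n \<longrightarrow> Q j z"
      using y(3) z(3,4) by (metis Suc_leI le_neq_implies_less)
    then show ?case
      using trans[OF \<open>I x\<close> y(1) z(1)] z(2) by blast
  qed
  from this[of 0] show ?thesis
    by auto
qed

lemma card_quotient_le_card:
  assumes equiv: "equiv A R" and "finite S"
    and invariant: "\<And>x. x \<in> A \<Longrightarrow> \<exists>s\<in>S. P x s"
    and same: "\<And>x y s. x \<in> A \<Longrightarrow> y \<in> A \<Longrightarrow> P x s \<Longrightarrow> P y s \<Longrightarrow> (x, y) \<in> R"
  shows "finite (A // R) \<and> card (A // R) \<le> card S"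
proof -
  define \<sigma> where "\<sigma> K = (SOME s. s \<in> S \<and> (\<exists>x\<in>K. P x s))" for K
  have \<sigma>: "\<sigma> K \<in> S \<and> (\<exists>x\<in>K. P x (\<sigma> K))" if K: "K \<in> A // R" for K
  proof -
    obtain x where x: "K = R `` {x}" "x \<in> A"
      using K by (rule quotientE)
    then have "\<exists>s. s \<in> S \<and> (\<exists>x\<in>K. P x s)"
      using invariant equiv_class_self[OF equiv] by blast
    then show ?thesis
      unfolding \<sigma>_def by (rule someI_ex)
  qed
  have "inj_on \<sigma> (A // R)"
  proof (rule inj_onI)
    fix K L
    assume K: "K \<in> A // R" and L: "L \<in> A // R" and "\<sigma> K = \<sigma> L"
    then obtain x y where "x \<in> K" "y \<in> L" "P x (\<sigma> K)" "P y (\<sigma> K)"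
      using \<sigma> by metis
    moreover from this have "x \<in> A" "y \<in> A"
      using K L in_quotient_imp_subset[OF equiv] by blast+
    ultimately show "K = L"
      using quotient_eqI[OF equiv K L] same by blast
  qed
  moreover have "\<sigma> ` (A // R) \<subseteq> S"
    using \<sigma> by blast
  ultimately show ?thesis
    using card_inj_on_le inj_on_finite \<open>finite S\<close> by blast
qed

section \<open>The filtration \<open>U\<^sub>j\<close>\<close>

definition vanishes_below :: "nat \<Rightarrow> 'a::zero fps \<Rightarrow> bool" where
  "vanishes_below k f \<longleftrightarrow> (\<forall>n<k. f $ n = 0)"

lemma vanishes_below_mult_nth:
  fixes f g :: "'a::semiring_0 fps"
  assumes "vanishes_below a f" "vanishes_below b g"
  shows "(\<forall>n<a + b. (f * g) $ n = 0) \<and> (f * g) $ (a + b) = f $ a * g $ b"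
proof -
  have zero: "f $ i * g $ (n - i) = 0" if "n \<le> a + b" "i \<le> n" "i \<noteq> a \<or> n < a + b" for n i
  proof (cases "i < a")
    case True then show ?thesis using assms(1) by (simp add: vanishes_below_def)
  next
    case False
    then have "n - i < b" using that by auto
    then show ?thesis using assms(2) by (simp add: vanishes_below_def)
  qed
  have "(f * g) $ n = 0" if "n < a + b" for n
    unfolding fps_mult_nth using that by (intro sum.neutral) (auto intro: zero)
  moreover have "(f * g) $ (a + b) = (\<Sum>i\<in>{a}. f $ i * g $ (a + b - i))"
    unfolding fps_mult_nth by (rule sum.mono_neutral_right) (auto intro: zero)
  ultimately show ?thesis by simp
qed

lemma vanishes_below_mult:
  fixes f g :: "'a::semiring_0 fps"
  shows "vanishes_below a f \<Longrightarrow> vanishes_below b g \<Longrightarrow> vanishes_below (a + b) (f * g)"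
  using vanishes_below_mult_nth unfolding vanishes_below_def by blast

lemma vanishes_below_mult_right:
  fixes f g :: "'a::semiring_0 fps"
  shows "vanishes_below a f \<Longrightarrow> vanishes_below a (f * g)"
  using vanishes_below_mult[of a f 0 g] by (simp add: vanishes_below_def)

lemma Uj_iff: "f \<in> Uj i \<longleftrightarrow> f $ 0 = 1 \<and> vanishes_below i (f - 1)"
  unfolding Uj_def vanishes_below_def by (auto simp: gr0_conv_Suc)

lemma Uj_antimono: "i \<le> j \<Longrightarrow> Uj j \<subseteq> Uj i"
  by (auto simp: Uj_def)

lemma Uj_subset_U1: "1 \<le> i \<Longrightarrow> f \<in> Uj i \<Longrightarrow> f \<in> Uj 1"
  using Uj_antimono by blast

lemma one_in_Uj: "1 \<in> Uj i"
  by (simp add: Uj_def)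

lemma mult_in_Uj:
  assumes "f \<in> Uj i" "g \<in> Uj i"
  shows "f * g \<in> Uj i"
proof -
  have "f * g - 1 = (f - 1) * g + (g - 1)"
    by (simp add: algebra_simps)
  moreover have "vanishes_below i ((f - 1) * g)"
    using assms by (intro vanishes_below_mult_right) (simp add: Uj_iff)
  ultimately show ?thesis
    using assms by (simp add: Uj_iff vanishes_below_def)
qed

lemma power_in_Uj: "f \<in> Uj i \<Longrightarrow> f ^ n \<in> Uj i"
  by (induction n) (auto simp: one_in_Uj mult_in_Uj)

lemma Uj_mult_nth:
  assumes "f \<in> Uj i" "g \<in> Uj i" "1 \<le> i"
  shows "(f * g) $ i = f $ i + g $ i"
proof -
  have "f * g = (f - 1) * g + g"
    by (simp add: algebra_simps)
  moreover have "((f - 1) * g) $ (i + 0) = (f - 1) $ i * g $ 0"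
    using assms by (intro conjunct2[OF vanishes_below_mult_nth]) (auto simp: Uj_iff vanishes_below_def)
  ultimately show ?thesis
    using assms by (simp add: Uj_iff)
qed

lemma Uj_power_nth:
  assumes "f \<in> Uj i" "1 \<le> i"
  shows "(f ^ n) $ i = of_nat n * f $ i"
proof (induction n)
  case (Suc n)
  have "(f ^ Suc n) $ i = f $ i + (f ^ n) $ i"
    using assms by (simp add: Uj_mult_nth power_in_Uj)
  then show ?case
    using Suc by (simp add: algebra_simps)
qed (use assms in simp)

lemma Uj_mult_inverse: "(f :: 'a::field fps) \<in> Uj i \<Longrightarrow> f * inverse f = 1"
  by (simp add: Uj_def inverse_mult_eq_1')

lemma Uj_mult_inverse_in_Uj_Suc:
  assumes "f \<in> Uj i" "g \<in> Uj i" "f $ i = g $ i"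
  shows "f * inverse g \<in> Uj (Suc i)"
proof -
  have "f * inverse g - 1 = (f - g) * inverse g"
    using Uj_mult_inverse[OF assms(2)] by (simp add: algebra_simps)
  moreover have "(f - g) $ n = 0" if "n < Suc i" for n
    using assms that unfolding Uj_def by (cases "n = 0"; cases "n = i") auto
  then have "vanishes_below (Suc i) (f - g)"
    by (simp add: vanishes_below_def)
  ultimately show ?thesis
    using assms by (simp add: Uj_iff vanishes_below_mult_right)
qed

definition E :: "nat \<Rightarrow> 'a::field fps" where
  "E i = 1 + fps_X ^ i"

lemma E_in_Uj: "1 \<le> i \<Longrightarrow> E i \<in> Uj i"
  by (simp add: Uj_def E_def)

lemma E_nth: "1 \<le> i \<Longrightarrow> (E i :: 'a::field fps) $ i = 1"
  by (simp add: E_def)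

lemma E_power_nth: "1 \<le> i \<Longrightarrow> (E i ^ n :: 'a::field fps) $ i = of_nat n"
  by (simp add: Uj_power_nth E_in_Uj E_nth)

lemma E_in_U1: "1 \<le> i \<Longrightarrow> E i \<in> Uj 1"
  using E_in_Uj Uj_subset_U1 by blast

lemma E_in_Uj_le: "1 \<le> i \<Longrightarrow> j \<le> i \<Longrightarrow> E i \<in> Uj j"
  using E_in_Uj Uj_antimono by blast

lemma Uj_eq_E_power_mult:
  fixes f :: "'a::field fps"
  assumes "1 \<le> i" "f \<in> Uj i" "of_nat n = f $ i"
  shows "\<exists>g\<in>Uj (Suc i). f = E i ^ n * g"
proof -
  have e: "E i ^ n \<in> Uj i"
    using assms(1) by (intro power_in_Uj E_in_Uj)
  have "f * inverse (E i ^ n) \<in> Uj (Suc i)"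
    using assms e by (intro Uj_mult_inverse_in_Uj_Suc) (auto simp: E_power_nth)
  moreover have "f = E i ^ n * (f * inverse (E i ^ n))"
    using Uj_mult_inverse[OF e] by (metis mult.left_commute mult.right_neutral)
  ultimately show ?thesis by blast
qed

context
  fixes p :: nat
  assumes prime_p: "prime p" and card_field: "card (UNIV :: 'a::{field,finite} set) = p"
begin

lemma CHAR_eq_p: "CHAR('a) = p"
proof -
  have "CHAR('a) dvd p"
    using CHAR_dvd_CARD[where 'a='a] card_field by simp
  then show ?thesis
    using prime_p CHAR_not_1' unfolding prime_nat_iff by (metis One_nat_def)
qed

lemma of_nat_eq_iff_dvd_diff: "(of_nat a :: 'a) = of_nat b \<longleftrightarrow> int p dvd int a - int b"
  using of_nat_eq_iff_cong_CHAR[where 'a='a] CHAR_eq_p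
  by (simp add: cong_int_iff[symmetric] cong_iff_dvd_diff)

lemma of_nat_surjective: "\<exists>n. (of_nat n :: 'a) = c"
proof -
  have "inj_on (of_nat :: nat \<Rightarrow> 'a) {..<p}"
    using of_nat_eq_iff_cong_CHAR[where 'a='a] CHAR_eq_p by (auto intro!: inj_onI simp: cong_def)
  then have "card ((of_nat :: nat \<Rightarrow> 'a) ` {..<p}) = card (UNIV :: 'a set)"
    by (simp add: card_image card_field)
  then have "(of_nat :: nat \<Rightarrow> 'a) ` {..<p} = UNIV"
    by (intro card_subset_eq) auto
  then show ?thesis
    by (metis UNIV_I imageE)
qed

lemma one_plus_power_p: "(1 + x :: 'a fps) ^ p = 1 + x ^ p"
proof -
  have "prime CHAR('a fps)" "p = CHAR('a fps)"
    using CHAR_eq_p prime_p by simp_all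
  then show ?thesis
    using freshmans_dream[of p "1 :: 'a fps" x] by simp
qed

lemma E_power_p: "(E i :: 'a fps) ^ p = E (p * i)"
  unfolding E_def one_plus_power_p by (simp add: power_mult[symmetric] mult.commute)

lemma Uj_factor_E_power:
  "1 \<le> i \<Longrightarrow> f \<in> Uj i \<Longrightarrow> \<exists>n. \<exists>g\<in>Uj (Suc i). f = (E i :: 'a fps) ^ n * g"
  using of_nat_surjective Uj_eq_E_power_mult by metis

end

text \<open>A character as in \<open>is_character\<close>, minus continuity, which the argument never uses.\<close>

locale U1_hom =
  fixes p :: nat and \<chi> :: "'a::field fps \<Rightarrow> int"
  assumes prime_p: "prime p"
    and vanishes_outside: "f \<notin> Uj 1 \<Longrightarrow> \<chi> f = 0"
    and range: "f \<in> Uj 1 \<Longrightarrow> 0 \<le> \<chi> f \<and> \<chi> f < int p ^ 2"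
    and mult: "f \<in> Uj 1 \<Longrightarrow> g \<in> Uj 1 \<Longrightarrow> \<chi> (f * g) = (\<chi> f + \<chi> g) mod int p ^ 2"
begin

lemma modulus_pos: "0 < int p ^ 2"
  using prime_gt_0_nat[OF prime_p] by simp

lemma nonneg: "0 \<le> \<chi> f"
  using range[of f] vanishes_outside[of f] by (cases "f \<in> Uj 1") auto

lemma less_modulus: "\<chi> f < int p ^ 2"
  using range[of f] vanishes_outside[of f] modulus_pos by (cases "f \<in> Uj 1") auto

lemma mod_modulus [simp]: "\<chi> f mod int p ^ 2 = \<chi> f"
  using nonneg less_modulus by simp

lemma one [simp]: "\<chi> 1 = 0"
proof -
  have "(\<chi> 1 + \<chi> 1) mod int p ^ 2 = (\<chi> 1 + 0) mod int p ^ 2"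
    using mult[OF one_in_Uj one_in_Uj] by simp
  then have dvd: "int p ^ 2 dvd \<chi> 1"
    by (simp only: mod_eq_dvd_iff) simp
  show ?thesis
  proof (rule ccontr)
    assume "\<chi> 1 \<noteq> 0"
    then have "int p ^ 2 \<le> \<chi> 1"
      using nonneg[of 1] by (intro zdvd_imp_le[OF dvd]) simp
    then show False
      using less_modulus[of 1] by simp
  qed
qed

lemma power: "f \<in> Uj 1 \<Longrightarrow> \<chi> (f ^ n) = int n * \<chi> f mod int p ^ 2"
proof (induction n)
  case (Suc n)
  then have "\<chi> (f ^ Suc n) = (\<chi> f + int n * \<chi> f mod int p ^ 2) mod int p ^ 2"
    using mult[OF Suc.prems power_in_Uj[OF Suc.prems]] by simp
  then show ?case
    by (simp add: mod_add_right_eq algebra_simps)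
qed simp

lemma E_power_mult:
  assumes "1 \<le> i" "g \<in> Uj 1"
  shows "\<chi> (E i ^ n * g) = (int n * \<chi> (E i) + \<chi> g) mod int p ^ 2"
  using mult[OF power_in_Uj[OF E_in_U1[OF assms(1)]] assms(2)] power[OF E_in_U1[OF assms(1)]]
  by (simp add: mod_add_left_eq)

lemma value_eq_p_mult:
  assumes "int p dvd \<chi> f" "\<chi> f \<noteq> 0"
  shows "\<exists>e. \<chi> f = int p * e \<and> \<not> int p dvd e"
proof -
  obtain e where e: "\<chi> f = int p * e"
    using assms(1) by blast
  have "0 < int p"
    using prime_gt_0_nat[OF prime_p] by simp
  moreover have "0 \<le> int p * e" "int p * e < int p * int p" "e \<noteq> 0"
    using nonneg[of f] less_modulus[of f] assms(2) e by (auto simp: power2_eq_square)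
  ultimately have "0 < e" "e < int p"
    by (auto simp: zero_le_mult_iff mult_less_cancel_left_pos)
  then show ?thesis
    using e zdvd_imp_le by fastforce
qed

lemma kernel_element_with_nth:
  assumes k: "1 \<le> k" and f: "f \<in> Uj (Suc k)"
    and dvd: "int p ^ 2 dvd \<chi> (1 + fps_const c * fps_X ^ k) + int n * \<chi> f"
  shows "\<exists>h\<in>Uj k. h $ k = c \<and> \<chi> h = 0"
proof -
  let ?h = "(1 + fps_const c * fps_X ^ k) * f ^ n"
  have h1: "1 + fps_const c * fps_X ^ k \<in> Uj k"
    using k by (simp add: Uj_def)
  have fn: "f ^ n \<in> Uj (Suc k)"
    using f by (rule power_in_Uj)
  have "f ^ n \<in> Uj 1"
    using Uj_subset_U1[OF _ fn] by simp
  then have "\<chi> ?h = (\<chi> (1 + fps_const c * fps_X ^ k) + \<chi> (f ^ n)) mod int p ^ 2"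
    by (rule mult[OF Uj_subset_U1[OF k h1]])
  also have "\<chi> (f ^ n) = int n * \<chi> f mod int p ^ 2"
    using Uj_subset_U1[OF _ f] by (intro power) simp
  finally have "\<chi> ?h = 0"
    using dvd by (simp add: mod_add_right_eq)
  moreover have "?h $ k = c"
    using Uj_mult_nth[OF h1 _ k] fn Uj_antimono[of k "Suc k"] k by (auto simp: Uj_def)
  moreover have "?h \<in> Uj k"
    using mult_in_Uj[OF h1] fn Uj_antimono[of k "Suc k"] by auto
  ultimately show ?thesis by blast
qed

end

lemma U1_hom_if_is_character: "prime p \<Longrightarrow> is_character p \<chi> \<Longrightarrow> U1_hom p \<chi>"
  by (simp add: is_character_def U1_hom_def)

section \<open>Substitution into elements of \<open>U\<^sub>i\<close>\<close>

lemma compose_X_mult_minus_nth: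
  fixes f h :: "'a::comm_ring_1 fps"
  shows "((f oo (fps_X * h)) - f) $ N = (\<Sum>n=0..N. f $ n * (h ^ n - 1) $ (N - n))"
proof -
  have compose: "(f oo (fps_X * h)) $ N = (\<Sum>n=0..N. f $ n * (h ^ n) $ (N - n))"
    by (auto simp: fps_compose_nth power_mult_distrib fps_X_power_mult_nth intro!: sum.cong)
  have "(\<Sum>n=0..N. f $ n * (1 :: 'a fps) $ (N - n)) = (\<Sum>n=0..N. if n = N then f $ n else 0)"
    by (intro sum.cong) auto
  then have delta: "(\<Sum>n=0..N. f $ n * (1 :: 'a fps) $ (N - n)) = f $ N"
    by simp
  have "((f oo (fps_X * h)) - f) $ N
      = (\<Sum>n=0..N. f $ n * (h ^ n) $ (N - n)) - (\<Sum>n=0..N. f $ n * (1 :: 'a fps) $ (N - n))"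
    by (simp only: fps_sub_nth compose delta)
  then show ?thesis
    by (simp only: sum_subtractf[symmetric] right_diff_distrib fps_sub_nth)
qed

text \<open>Substituting \<open>t h\<close> for \<open>t\<close>, with \<open>h \<in> U\<^sub>k\<close>, changes \<open>f \<in> U\<^sub>i\<close> only from degree \<open>i + k\<close> on,
  where the change is \<open>i f\<^sub>i h\<^sub>k\<close>; all other terms \<open>f\<^sub>n (h\<^sup>n - 1) t\<^sup>n\<close> start too late.\<close>

lemma compose_X_mult_minus:
  fixes f h :: "'a::field fps"
  assumes f: "f \<in> Uj i" "1 \<le> i" and h: "h \<in> Uj k" "1 \<le> k"
  shows "vanishes_below (i + k) ((f oo (fps_X * h)) - f)"
    and "((f oo (fps_X * h)) - f) $ (i + k) = of_nat i * f $ i * h $ k"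
proof -
  have h_power: "vanishes_below k (h ^ n - 1)" for n
    using power_in_Uj[OF h(1)] by (simp add: Uj_iff)
  have term_zero: "f $ n * (h ^ n - 1) $ (N - n) = 0"
    if "N \<le> i + k" "n \<le> N" "n \<noteq> i \<or> N < i + k" for N n
  proof -
    have "n = 0 \<or> 0 < n \<and> n < i \<or> N - n < k"
      using that by auto
    then show ?thesis
      using f(1) h_power by (auto simp: Uj_def vanishes_below_def)
  qed
  show "vanishes_below (i + k) ((f oo (fps_X * h)) - f)"
    unfolding vanishes_below_def compose_X_mult_minus_nth
    by (intro allI impI sum.neutral ballI term_zero) auto
  have "((f oo (fps_X * h)) - f) $ (i + k) = (\<Sum>n\<in>{i}. f $ n * (h ^ n - 1) $ (i + k - n))"
    unfolding compose_X_mult_minus_nth by (intro sum.mono_neutral_right ballI term_zero) auto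
  also have "\<dots> = f $ i * (of_nat i * h $ k)"
    using Uj_power_nth[OF h] h(2) by simp
  finally show "((f oo (fps_X * h)) - f) $ (i + k) = of_nat i * f $ i * h $ k"
    by (simp add: algebra_simps)
qed

lemma compose_X_mult_eq_mult:
  fixes f h :: "'a::field fps"
  assumes "f \<in> Uj i" "1 \<le> i" "h \<in> Uj k" "1 \<le> k"
  shows "\<exists>g\<in>Uj (i + k). g $ (i + k) = of_nat i * f $ i * h $ k \<and> f oo (fps_X * h) = f * g"
proof -
  let ?D = "(f oo (fps_X * h)) - f"
  define g where "g = 1 + ?D * inverse f"
  have inv: "f * inverse f = 1" "inverse f $ 0 = 1"
    using Uj_mult_inverse assms(1) by (auto simp: Uj_def)
  have "vanishes_below (i + k) (g - 1)"
    using compose_X_mult_minus(1)[OF assms] by (simp add: g_def vanishes_below_mult_right)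
  moreover from this have "(g - 1) $ 0 = 0"
    using assms(2) by (simp add: vanishes_below_def)
  ultimately have "g \<in> Uj (i + k)"
    by (simp add: Uj_iff)
  moreover have "(?D * inverse f) $ (i + k + 0) = ?D $ (i + k) * inverse f $ 0"
    using compose_X_mult_minus(1)[OF assms] inv(2)
    by (intro conjunct2[OF vanishes_below_mult_nth]) (auto simp: vanishes_below_def)
  then have "g $ (i + k) = of_nat i * f $ i * h $ k"
    using assms(2) inv(2) compose_X_mult_minus(2)[OF assms] by (simp add: g_def)
  moreover have "f * g = f + (f * inverse f) * ?D"
    by (simp add: g_def algebra_simps)
  then have "f oo (fps_X * h) = f * g"
    using inv(1) by simp
  ultimately show ?thesis by blast
qed

section \<open>The Nottingham group and its action\<close>

lemma nottingham_eq_X_mult: "u \<in> nottingham \<Longrightarrow> u = fps_X * fps_shift 1 u"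
  by (auto simp: nottingham_def fps_eq_iff)

lemma fps_shift_nottingham: "u \<in> nottingham \<Longrightarrow> fps_shift 1 u \<in> Uj 1"
  by (simp add: nottingham_def Uj_def)

lemma X_mult_in_nottingham: "h \<in> Uj 1 \<Longrightarrow> fps_X * h \<in> nottingham"
  by (simp add: nottingham_def Uj_def)

lemma fps_shift_X_mult: "fps_shift 1 (fps_X * a) = (a :: 'a::field fps)"
  by (metis fps_shift_times_fps_X' mult.commute)

lemma X_mult_compose: "u $ 0 = 0 \<Longrightarrow> (fps_X * a) oo u = u * (a oo u)"
  for a u :: "'a::field fps"
  by (simp add: fps_compose_mult_distrib)

lemma compose_in_Uj:
  fixes f u :: "'a::field fps"
  assumes f: "f \<in> Uj i" and u: "u \<in> nottingham"
  shows "f oo u \<in> Uj i"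
proof (cases "i = 0")
  case True
  then show ?thesis using assms by (simp add: Uj_def)
next
  case False
  obtain g where "g \<in> Uj (i + 1)" "f oo u = f * g"
    using compose_X_mult_eq_mult[OF f _ fps_shift_nottingham[OF u] order.refl] False
      nottingham_eq_X_mult[OF u] by auto
  then show ?thesis
    using mult_in_Uj[OF f] Uj_antimono[of i "i + 1"] by auto
qed

lemma fps_shift_compose:
  fixes u v :: "'a::field fps"
  assumes "u \<in> nottingham" "v \<in> nottingham"
  shows "fps_shift 1 (v oo u) = fps_shift 1 u * (fps_shift 1 v oo u)"
proof -
  have "u $ 0 = 0"
    using assms(1) by (simp add: nottingham_def)
  then have "v oo u = fps_X * (fps_shift 1 u * (fps_shift 1 v oo u))"
    using X_mult_compose nottingham_eq_X_mult[OF assms(2)] nottingham_eq_X_mult[OF assms(1)]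
    by (metis mult.assoc)
  then show ?thesis
    by (metis fps_shift_X_mult)
qed

lemma compose_in_nottingham:
  fixes u v :: "'a::field fps"
  assumes "u \<in> nottingham" "v \<in> nottingham"
  shows "v oo u \<in> nottingham"
proof -
  have "fps_shift 1 (v oo u) \<in> Uj 1"
    unfolding fps_shift_compose[OF assms] using assms
    by (intro mult_in_Uj compose_in_Uj fps_shift_nottingham)
  then show ?thesis
    using assms(2) by (simp add: nottingham_def Uj_def)
qed

lemma act_compose:
  assumes "u \<in> nottingham" "v \<in> nottingham"
  shows "act (v oo u) \<chi> = act v (act u \<chi>)"
proof -
  have "f oo (v oo u) = (f oo v) oo u" for f
    using assms by (intro fps_compose_assoc) (auto simp: nottingham_def)
  then show ?thesis
    using compose_in_Uj[OF _ assms(2)] by (auto simp: act_def)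
qed

context U1_hom
begin

lemma act_X [simp]: "act fps_X \<chi> = \<chi>"
  by (auto simp: act_def vanishes_outside)

lemma act_U1_hom:
  assumes u: "u \<in> nottingham"
  shows "U1_hom p (act u \<chi>)"
proof
  have u0: "u $ 0 = 0"
    using u by (simp add: nottingham_def)
  fix f g :: "'a fps"
  assume "f \<in> Uj 1" "g \<in> Uj 1"
  then show "act u \<chi> (f * g) = (act u \<chi> f + act u \<chi> g) mod int p ^ 2"
    using mult compose_in_Uj[OF _ u] fps_compose_mult_distrib[OF u0]
    by (simp add: act_def mult_in_Uj)
qed (use prime_p nonneg less_modulus in \<open>auto simp: act_def\<close>)

lemma strictly_equiv_refl: "strictly_equiv \<chi> \<chi>"
proof -
  have "fps_X \<in> nottingham" "fps_shift 1 fps_X = (1 :: 'a fps)"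
    using fps_shift_X_mult[of 1] by (simp_all add: nottingham_def)
  then show ?thesis
    unfolding strictly_equiv_def by force
qed

lemma strictly_equiv_act_X_mult:
  assumes "h \<in> Uj 1" "\<chi> h = 0"
  shows "strictly_equiv \<chi> (act (fps_X * h) \<chi>)"
  using assms X_mult_in_nottingham fps_shift_X_mult[of h] unfolding strictly_equiv_def by metis

lemma strictly_equiv_trans:
  assumes "strictly_equiv \<chi> \<psi>" "strictly_equiv \<psi> \<phi>"
  shows "strictly_equiv \<chi> \<phi>"
proof -
  obtain u where u: "u \<in> nottingham" "\<chi> (fps_shift 1 u) = 0" "\<psi> = act u \<chi>"
    using assms(1) by (auto simp: strictly_equiv_def)
  obtain v where v: "v \<in> nottingham" "\<psi> (fps_shift 1 v) = 0" "\<phi> = act v \<psi>"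
    using assms(2) by (auto simp: strictly_equiv_def)
  have sv: "fps_shift 1 v \<in> Uj 1"
    using v(1) by (rule fps_shift_nottingham)
  have "\<chi> (fps_shift 1 (v oo u)) = (\<chi> (fps_shift 1 u) + \<chi> (fps_shift 1 v oo u)) mod int p ^ 2"
    unfolding fps_shift_compose[OF u(1) v(1)]
    using fps_shift_nottingham[OF u(1)] compose_in_Uj[OF sv u(1)] by (rule mult)
  also have "\<chi> (fps_shift 1 v oo u) = \<psi> (fps_shift 1 v)"
    using sv u(3) by (simp add: act_def)
  finally have "\<chi> (fps_shift 1 (v oo u)) = 0"
    using u(2) v(2) by simp
  moreover have "\<phi> = act (v oo u) \<chi>"
    using u v by (simp add: act_compose)
  ultimately show ?thesis
    unfolding strictly_equiv_def using compose_in_nottingham[OF u(1) v(1)] by blast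
qed

lemma strictly_equiv_sym:
  assumes "strictly_equiv \<chi> \<psi>"
  shows "strictly_equiv \<psi> \<chi>"
proof -
  obtain u where u: "u \<in> nottingham" "\<chi> (fps_shift 1 u) = 0" "\<psi> = act u \<chi>"
    using assms by (auto simp: strictly_equiv_def)
  define w where "w = fps_inv u"
  have w: "w \<in> nottingham" "w oo u = fps_X"
    using u(1) fps_inv[of u] by (auto simp: nottingham_def w_def fps_inv_def)
  have sw: "fps_shift 1 w \<in> Uj 1"
    using w(1) by (rule fps_shift_nottingham)
  have "0 = \<chi> (fps_shift 1 (w oo u))"
    using w(2) fps_shift_X_mult[of 1] by simp
  also have "\<dots> = (\<chi> (fps_shift 1 u) + \<chi> (fps_shift 1 w oo u)) mod int p ^ 2"
    unfolding fps_shift_compose[OF u(1) w(1)]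
    using fps_shift_nottingham[OF u(1)] compose_in_Uj[OF sw u(1)] by (rule mult)
  also have "\<chi> (fps_shift 1 w oo u) = \<psi> (fps_shift 1 w)"
    using sw u(3) by (simp add: act_def)
  finally have "\<psi> (fps_shift 1 w) = 0"
    using u(2,3) U1_hom.mod_modulus[OF act_U1_hom[OF u(1)]] by simp
  moreover have "\<chi> = act w \<psi>"
    using u w by (simp add: act_compose[symmetric])
  ultimately show ?thesis
    unfolding strictly_equiv_def using w(1) by blast
qed

end

lemma equiv_strictly_equiv:
  assumes "\<And>\<chi>. \<chi> \<in> A \<Longrightarrow> U1_hom p \<chi>"
  shows "equiv A {(\<chi>, \<psi>). \<chi> \<in> A \<and> \<psi> \<in> A \<and> strictly_equiv \<chi> \<psi>}"
  using assms U1_hom.strictly_equiv_refl U1_hom.strictly_equiv_sym U1_hom.strictly_equiv_trans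
  unfolding equiv_def refl_on_def sym_def trans_def by blast

section \<open>Normal forms under strict equivalence\<close>

text \<open>The type \<open>\<langle>l, m\<rangle>\<close> stated through \<open>E\<^sub>l\<close> and \<open>E\<^sub>m\<close>, a form visibly preserved by the action.\<close>

definition hom_of_type :: "nat \<Rightarrow> nat \<Rightarrow> nat \<Rightarrow> ('a::field fps \<Rightarrow> int) \<Rightarrow> bool" where
  "hom_of_type p l m \<chi> \<longleftrightarrow> U1_hom p \<chi> \<and> 1 \<le> l \<and> l < m \<and>
     (\<forall>f\<in>Uj (Suc l). int p dvd \<chi> f) \<and> (\<forall>f\<in>Uj (Suc m). \<chi> f = 0) \<and>
     \<not> int p dvd \<chi> (E l) \<and> \<chi> (E m) \<noteq> 0"

text \<open>The values on the \<open>E\<^sub>j\<close> of the reduced forms \<open>x\<^sub>l Z\<^sub>l + \<Sum>\<^bsub>m-l\<le>j\<le>m\<^esub> b\<^sub>j p Z\<^sub>j\<close>: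
  no unit part below \<open>l\<close>, and no part divisible by \<open>p\<close> below \<open>m - l\<close>.\<close>

definition E_value_dvd_p :: "nat \<Rightarrow> nat \<Rightarrow> ('a::field fps \<Rightarrow> int) \<Rightarrow> bool" where
  "E_value_dvd_p p j \<psi> \<longleftrightarrow> (1 \<le> j \<and> \<not> p dvd j \<longrightarrow> int p dvd \<psi> (E j))"

definition E_value_less_p :: "nat \<Rightarrow> nat \<Rightarrow> ('a::field fps \<Rightarrow> int) \<Rightarrow> bool" where
  "E_value_less_p p j \<psi> \<longleftrightarrow> (1 \<le> j \<and> \<not> p dvd j \<longrightarrow> \<psi> (E j) < int p)"

definition reduced :: "nat \<Rightarrow> nat \<Rightarrow> nat \<Rightarrow> ('a::field fps \<Rightarrow> int) \<Rightarrow> bool" where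
  "reduced p l m \<psi> \<longleftrightarrow> hom_of_type p l m \<psi> \<and>
     (\<forall>j<l. E_value_dvd_p p j \<psi>) \<and> (\<forall>j<m - l. E_value_less_p p j \<psi>)"

definition reduced_values :: "nat \<Rightarrow> nat \<Rightarrow> nat \<Rightarrow> nat \<Rightarrow> int set" where
  "reduced_values p l m j = {v. 0 \<le> v \<and> v < int p ^ 2 \<and> (j = l \<longleftrightarrow> \<not> int p dvd v) \<and>
     (j < m - l \<longrightarrow> v < int p) \<and> (j = m \<longrightarrow> v \<noteq> 0)}"

definition reduced_count :: "nat \<Rightarrow> nat \<Rightarrow> nat \<Rightarrow> nat \<Rightarrow> nat" where
  "reduced_count p l m j =
     (if j = l then p - 1 else 1) * (if j = m then p - 1 else if m - l \<le> j then p else 1)"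

lemma reduced_value_in_reduced_values:
  fixes \<psi> :: "'a::field fps \<Rightarrow> int"
  assumes "reduced p l m \<psi>" "1 \<le> j" "j \<le> m" "\<not> p dvd j"
  shows "\<psi> (E j) \<in> reduced_values p l m j"
proof -
  have type: "hom_of_type p l m \<psi>"
    using assms(1) by (simp add: reduced_def)
  then have "int p dvd \<psi> (E j)" if "j \<noteq> l"
    using that assms(1-4) E_in_Uj_le[of j "Suc l"]
    by (cases "j < l") (auto simp: reduced_def hom_of_type_def E_value_dvd_p_def)
  then show ?thesis
    using assms type U1_hom.nonneg U1_hom.less_modulus
    by (auto simp: reduced_values_def reduced_def hom_of_type_def E_value_less_p_def)
qed

lemma card_reduced_values_le:
  assumes "prime p" "l < m" "j \<le> m"
  shows "card (reduced_values p l m j) \<le> reduced_count p l m j"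
proof -
  have p: "0 < int p"
    using prime_gt_0_nat[OF assms(1)] by simp
  have np: "nat (int p - 1) = p - 1"
    by (cases p) auto
  define X where "X = (if j = l then {1..<int p} else {0})"
  define Y where "Y = (if j = m then {1..<int p} else if m - l \<le> j then {0..<int p} else {0})"
  have "reduced_values p l m j \<subseteq> (\<lambda>(a, b). a + int p * b) ` (X \<times> Y)"
  proof
    fix v
    assume v: "v \<in> reduced_values p l m j"
    have "0 \<le> v mod int p" "v mod int p < int p"
      using p by simp_all
    then have mod_in: "v mod int p \<in> X"
      using v by (cases "j = l") (auto simp: X_def reduced_values_def dvd_eq_mod_eq_0)
    have "v < int p * int p"
      using v by (simp add: reduced_values_def power2_eq_square)
    then have "int p * (v div int p) < int p * int p"
      using mult_div_mod_eq[of "int p" v] pos_mod_sign[OF p, of v] by linarith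
    then have "v div int p < int p"
      using p by simp
    moreover have "int p \<le> v" if "j = m"
      using v that assms(2) by (intro zdvd_imp_le) (auto simp: reduced_values_def)
    ultimately have "v div int p \<in> Y"
      using v p assms(2) by (auto simp: Y_def reduced_values_def div_pos_pos_trivial
          pos_imp_zdiv_pos_iff pos_imp_zdiv_nonneg_iff)
    then show "v \<in> (\<lambda>(a, b). a + int p * b) ` (X \<times> Y)"
      using mod_in by (intro image_eqI[of _ _ "(v mod int p, v div int p)"]) auto
  qed
  moreover have fin: "finite (X \<times> Y)"
    by (simp add: X_def Y_def)
  ultimately have "card (reduced_values p l m j) \<le> card ((\<lambda>(a, b). a + int p * b) ` (X \<times> Y))"
    by (intro card_mono) auto
  also have "\<dots> \<le> card (X \<times> Y)"
    using fin by (rule card_image_le)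
  also have "\<dots> = reduced_count p l m j"
    using assms(3) np by (auto simp: card_cartesian_product X_def Y_def reduced_count_def)
  finally show ?thesis .
qed

lemma prod_reduced_count:
  assumes "1 \<le> l" "l < m" "\<not> p dvd l"
  shows "(\<Prod>j\<in>{j. 1 \<le> j \<and> j \<le> m \<and> \<not> p dvd j}. reduced_count p l m j) = bound_B p l m"
proof -
  let ?J = "{j. 1 \<le> j \<and> j \<le> m \<and> \<not> p dvd j}"
  have fin: "finite ?J"
    by (rule finite_subset[of _ "{..m}"]) auto
  have "(\<Prod>j\<in>?J. reduced_count p l m j) = (\<Prod>j\<in>?J. if j = l then p - 1 else 1) *
      ((\<Prod>j\<in>?J. if j = m then p - 1 else 1) * (\<Prod>j\<in>?J. if m - l \<le> j \<and> j < m then p else 1))"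
    unfolding reduced_count_def prod.distrib[symmetric] using \<open>l < m\<close> by (intro prod.cong) auto
  also have "(\<Prod>j\<in>?J. if j = l then p - 1 else 1) = p - 1"
    using fin assms by simp
  also have "(\<Prod>j\<in>?J. if j = m then p - 1 else 1) = (if p dvd m then 1 else p - 1)"
    using fin assms by simp
  also have "(\<Prod>j\<in>?J. if m - l \<le> j \<and> j < m then p else 1) = p ^ card {j \<in> {m - l..m - 1}. \<not> p dvd j}"
  proof -
    have "(\<Prod>j\<in>?J. if m - l \<le> j \<and> j < m then p else 1) =
        (\<Prod>j\<in>?J \<inter> {j. m - l \<le> j \<and> j < m}. p) * (\<Prod>j\<in>?J \<inter> - {j. m - l \<le> j \<and> j < m}. 1)"
      by (rule prod.If_cases[OF fin])
    moreover have "?J \<inter> {j. m - l \<le> j \<and> j < m} = {j \<in> {m - l..m - 1}. \<not> p dvd j}"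
      using assms by auto
    ultimately show ?thesis
      by simp
  qed
  finally show ?thesis
    by (simp add: bound_B_def power2_eq_square)
qed

lemma finite_reduced_value_vectors:
  "finite (PiE {j. 1 \<le> j \<and> j \<le> m \<and> \<not> p dvd j} (reduced_values p l m))"
proof (rule finite_PiE)
  show "finite {j. 1 \<le> j \<and> j \<le> m \<and> \<not> p dvd j}"
    by (rule finite_subset[of _ "{..m}"]) auto
  show "finite (reduced_values p l m j)" for j
    by (rule finite_subset[of _ "{0..<int p ^ 2}"]) (auto simp: reduced_values_def)
qed

lemma card_reduced_value_vectors_le:
  assumes "prime p" "1 \<le> l" "l < m" "\<not> p dvd l"
  shows "card (PiE {j. 1 \<le> j \<and> j \<le> m \<and> \<not> p dvd j} (reduced_values p l m)) \<le> bound_B p l m"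
proof -
  let ?J = "{j. 1 \<le> j \<and> j \<le> m \<and> \<not> p dvd j}"
  have "card (PiE ?J (reduced_values p l m)) = (\<Prod>j\<in>?J. card (reduced_values p l m j))"
    by (rule card_PiE, rule finite_subset[of _ "{..m}"]) auto
  also have "\<dots> \<le> (\<Prod>j\<in>?J. reduced_count p l m j)"
    using assms by (intro prod_mono) (auto intro: card_reduced_values_le)
  also have "\<dots> = bound_B p l m"
    using assms(2-4) by (rule prod_reduced_count)
  finally show ?thesis .
qed

section \<open>Reduction by the action\<close>

context
  fixes p :: nat
  assumes prime_p: "prime p" and card_field: "card (UNIV :: 'a::{field,finite} set) = p"
begin

lemma value_E_power_p:
  fixes \<chi> :: "'a fps \<Rightarrow> int"
  assumes "U1_hom p \<chi>" "1 \<le> i"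
  shows "\<chi> (E (p * i)) = int p * \<chi> (E i) mod int p ^ 2"
  using U1_hom.power[OF assms(1) E_in_U1[OF assms(2)], of p]
  by (simp add: E_power_p[OF prime_p card_field, symmetric])

lemma value_in_Uj:
  fixes \<chi> :: "'a fps \<Rightarrow> int"
  assumes "U1_hom p \<chi>" "1 \<le> i" "f \<in> Uj i"
  shows "\<exists>n. \<exists>g\<in>Uj (Suc i). \<chi> f = (int n * \<chi> (E i) + \<chi> g) mod int p ^ 2"
proof -
  obtain n g where g: "g \<in> Uj (Suc i)" "f = E i ^ n * g"
    using Uj_factor_E_power[OF prime_p card_field assms(2,3)] by blast
  have "\<chi> f = (int n * \<chi> (E i) + \<chi> g) mod int p ^ 2"
    unfolding g(2) using Uj_subset_U1[OF _ g(1)] by (intro U1_hom.E_power_mult[OF assms(1,2)]) simp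
  then show ?thesis
    using g(1) by blast
qed

lemma act_X_mult_E:
  fixes \<chi> :: "'a fps \<Rightarrow> int"
  assumes hom: "U1_hom p \<chi>" and h: "h \<in> Uj k" "1 \<le> k" and i: "1 \<le> i"
  shows "\<exists>n. \<exists>g\<in>Uj (Suc (i + k)). (of_nat n :: 'a) = of_nat i * h $ k \<and>
           act (fps_X * h) \<chi> (E i) = (\<chi> (E i) + int n * \<chi> (E (i + k)) + \<chi> g) mod int p ^ 2"
proof -
  interpret U1_hom p \<chi> by (rule hom)
  obtain g0 where g0: "g0 \<in> Uj (i + k)" "g0 $ (i + k) = of_nat i * E i $ i * h $ k"
    "E i oo (fps_X * h) = E i * g0"
    using compose_X_mult_eq_mult[OF E_in_Uj[OF i] i h] by blast
  obtain n where n: "(of_nat n :: 'a) = g0 $ (i + k)"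
    using of_nat_surjective[OF prime_p card_field] by metis
  obtain g where g: "g \<in> Uj (Suc (i + k))" "g0 = E (i + k) ^ n * g"
    using Uj_eq_E_power_mult[OF _ g0(1) n] i by auto
  have "g0 \<in> Uj 1"
    using Uj_subset_U1[OF _ g0(1)] i by simp
  have "act (fps_X * h) \<chi> (E i) = \<chi> (E i * g0)"
    using g0(3) E_in_U1[OF i, where 'a='a] by (simp add: act_def)
  also have "\<dots> = (\<chi> (E i) + \<chi> g0) mod int p ^ 2"
    using E_in_U1[OF i] \<open>g0 \<in> Uj 1\<close> by (rule mult)
  also have "\<chi> g0 = (int n * \<chi> (E (i + k)) + \<chi> g) mod int p ^ 2"
    unfolding g(2) using i Uj_subset_U1[OF _ g(1)] by (intro E_power_mult) auto
  also have "(\<chi> (E i) + \<dots>) mod int p ^ 2 = (\<chi> (E i) + int n * \<chi> (E (i + k)) + \<chi> g) mod int p ^ 2"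
    by (simp add: mod_add_right_eq add.assoc)
  finally show ?thesis
    using g(1) g0(2) n E_nth[OF i, where 'a='a] by auto
qed

lemma act_X_mult_E_dvd_diff:
  fixes \<chi> :: "'a fps \<Rightarrow> int"
  assumes hom: "U1_hom p \<chi>" and h: "h \<in> Uj k" "1 \<le> k" and i: "1 \<le> i"
    and dvd: "\<forall>f\<in>Uj (Suc l). int p dvd \<chi> f" and "l < i + k"
  shows "int p dvd act (fps_X * h) \<chi> (E i) - \<chi> (E i)"
proof -
  obtain n g where "g \<in> Uj (Suc (i + k))"
    and val: "act (fps_X * h) \<chi> (E i) = (\<chi> (E i) + int n * \<chi> (E (i + k)) + \<chi> g) mod int p ^ 2"
    using act_X_mult_E[OF hom h i] by blast
  moreover have "E (i + k) \<in> Uj (Suc l)"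
    using \<open>l < i + k\<close> by (intro E_in_Uj_le) auto
  ultimately have "int p dvd int n * \<chi> (E (i + k)) + \<chi> g"
    using dvd Uj_antimono[of "Suc l" "Suc (i + k)"] \<open>l < i + k\<close> by auto
  then show ?thesis
    unfolding val add.assoc by (rule dvd_add_mod_square_diff)
qed

lemma act_X_mult_E_eq:
  fixes \<chi> :: "'a fps \<Rightarrow> int"
  assumes hom: "U1_hom p \<chi>" and h: "h \<in> Uj k" "1 \<le> k" and i: "1 \<le> i"
    and zero: "\<forall>f\<in>Uj (Suc m). \<chi> f = 0" and "m < i + k"
  shows "act (fps_X * h) \<chi> (E i) = \<chi> (E i)"
proof -
  obtain n g where "g \<in> Uj (Suc (i + k))"
    and val: "act (fps_X * h) \<chi> (E i) = (\<chi> (E i) + int n * \<chi> (E (i + k)) + \<chi> g) mod int p ^ 2"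
    using act_X_mult_E[OF hom h i] by blast
  moreover have "E (i + k) \<in> Uj (Suc m)"
    using \<open>m < i + k\<close> by (intro E_in_Uj_le) auto
  ultimately show ?thesis
    using zero Uj_antimono[of "Suc m" "Suc (i + k)"] \<open>m < i + k\<close> U1_hom.mod_modulus[OF hom]
    by auto
qed

lemma hom_of_type_act:
  fixes \<chi> :: "'a fps \<Rightarrow> int"
  assumes type: "hom_of_type p l m \<chi>" and u: "u \<in> nottingham"
  shows "hom_of_type p l m (act u \<chi>)"
proof -
  have hom: "U1_hom p \<chi>" and lm: "1 \<le> l" "l < m"
    and dvd: "\<forall>f\<in>Uj (Suc l). int p dvd \<chi> f" and zero: "\<forall>f\<in>Uj (Suc m). \<chi> f = 0"
    using type by (auto simp: hom_of_type_def)
  obtain h where h: "h \<in> Uj 1" "u = fps_X * h"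
    using nottingham_eq_X_mult[OF u] fps_shift_nottingham[OF u] by blast
  have "\<forall>f\<in>Uj (Suc l). int p dvd act u \<chi> f" "\<forall>f\<in>Uj (Suc m). act u \<chi> f = 0"
    using dvd zero compose_in_Uj[OF _ u] by (auto simp: act_def)
  moreover have "int p dvd act u \<chi> (E l) - \<chi> (E l)"
    using act_X_mult_E_dvd_diff[OF hom h(1) order.refl lm(1) dvd] h(2) by simp
  then have "\<not> int p dvd act u \<chi> (E l)"
    using type by (auto simp: hom_of_type_def dest: dvd_diff)
  moreover have "act u \<chi> (E m) = \<chi> (E m)"
    using act_X_mult_E_eq[OF hom h(1) order.refl _ zero] h(2) lm by simp
  ultimately show ?thesis
    using type U1_hom.act_U1_hom[OF hom u] by (simp add: hom_of_type_def)
qed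
lemma exists_kernel_substitution:
  fixes \<chi> :: "'a fps \<Rightarrow> int"
  assumes hom: "U1_hom p \<chi>" and j: "1 \<le> j" and k: "1 \<le> k"
    and dvd: "int p ^ 2 dvd \<chi> (1 + fps_const (of_nat c) * fps_X ^ k) + int n * \<chi> (E (j + k))"
  shows "\<exists>h\<in>Uj k. \<chi> h = 0 \<and> (\<exists>n'. \<exists>g\<in>Uj (Suc (j + k)). int p dvd int n' - int j * int c \<and>
           act (fps_X * h) \<chi> (E j) = (\<chi> (E j) + int n' * \<chi> (E (j + k)) + \<chi> g) mod int p ^ 2)"
proof -
  obtain h where h: "h \<in> Uj k" "h $ k = of_nat c" "\<chi> h = 0"
    using U1_hom.kernel_element_with_nth[OF hom k E_in_Uj_le dvd] j by auto
  moreover obtain n' g where "g \<in> Uj (Suc (j + k))" "(of_nat n' :: 'a) = of_nat j * h $ k"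
    "act (fps_X * h) \<chi> (E j) = (\<chi> (E j) + int n' * \<chi> (E (j + k)) + \<chi> g) mod int p ^ 2"
    using act_X_mult_E[OF hom h(1) k j] by blast
  moreover from this have "int p dvd int n' - int j * int c"
    using h(2) of_nat_eq_iff_dvd_diff[OF prime_p card_field, of n' "j * c"] by simp
  ultimately show ?thesis
    by blast
qed

lemma reduce_residue_step:
  fixes \<chi> :: "'a fps \<Rightarrow> int"
  assumes type: "hom_of_type p l m \<chi>" and j: "1 \<le> j" "j < l" "\<not> p dvd j"
  shows "\<exists>\<psi>. strictly_equiv \<chi> \<psi> \<and> hom_of_type p l m \<psi> \<and> int p dvd \<psi> (E j) \<and>
           (\<forall>i>j. int p dvd \<psi> (E i) - \<chi> (E i))"
proof -
  have hom: "U1_hom p \<chi>" and dvd: "\<forall>f\<in>Uj (Suc l). int p dvd \<chi> f" and l: "\<not> int p dvd \<chi> (E l)"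
    using type by (auto simp: hom_of_type_def)
  interpret U1_hom p \<chi> by (rule hom)
  define k where "k = l - j"
  have k: "1 \<le> k" "j + k = l"
    using j by (auto simp: k_def)
  have "\<not> int p dvd int j * \<chi> (E l)"
    using j(3) l prime_p by (simp add: prime_dvd_mult_iff)
  then obtain c where c: "int p dvd \<chi> (E j) + int c * (int j * \<chi> (E l))"
    using exists_nat_dvd_add_mult[OF prime_p, where e = 1] by fastforce
  obtain n where "int p ^ 2 dvd \<chi> (1 + fps_const (of_nat c) * fps_X ^ k) + int n * \<chi> (E (j + k))"
    using exists_nat_dvd_add_mult[OF prime_p l] k(2) by blast
  then obtain h n' g where h: "h \<in> Uj k" "\<chi> h = 0" and g: "g \<in> Uj (Suc l)"
    and n': "int p dvd int n' - int j * int c"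
    and val: "act (fps_X * h) \<chi> (E j) = (\<chi> (E j) + int n' * \<chi> (E l) + \<chi> g) mod int p ^ 2"
    using exists_kernel_substitution[OF hom j(1) k(1)] k(2) by blast
  define \<psi> where "\<psi> = act (fps_X * h) \<chi>"
  have "int p dvd (\<chi> (E j) + int c * (int j * \<chi> (E l))) + (int n' - int j * int c) * \<chi> (E l) + \<chi> g"
    using dvd_add[OF dvd_add[OF c dvd_mult2[OF n']]] g dvd by blast
  then have "int p dvd \<psi> (E j)"
    unfolding \<psi>_def val by (subst dvd_mod_iff) (auto simp: algebra_simps)
  moreover have "\<forall>i>j. int p dvd \<psi> (E i) - \<chi> (E i)"
    using act_X_mult_E_dvd_diff[OF hom h(1) k(1) _ dvd] k(2) j(1) unfolding \<psi>_def by auto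
  ultimately show ?thesis
    unfolding \<psi>_def using strictly_equiv_act_X_mult Uj_subset_U1[OF k(1) h(1)] h(2)
      hom_of_type_act[OF type X_mult_in_nottingham] by blast
qed

lemma reduce_quotient_step:
  fixes \<chi> :: "'a fps \<Rightarrow> int"
  assumes type: "hom_of_type p l m \<chi>" and j: "1 \<le> j" "j < m - l" "\<not> p dvd j"
  shows "\<exists>\<psi>. strictly_equiv \<chi> \<psi> \<and> hom_of_type p l m \<psi> \<and> \<psi> (E j) < int p \<and>
           (\<forall>i\<ge>1. int p dvd \<psi> (E i) - \<chi> (E i)) \<and> (\<forall>i>j. \<psi> (E i) = \<chi> (E i))"
proof -
  have hom: "U1_hom p \<chi>" and dvd: "\<forall>f\<in>Uj (Suc l). int p dvd \<chi> f"
    and zero: "\<forall>f\<in>Uj (Suc m). \<chi> f = 0" and "\<chi> (E m) \<noteq> 0" "l < m"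
    using type by (auto simp: hom_of_type_def)
  interpret U1_hom p \<chi> by (rule hom)
  define k where "k = m - j"
  have k: "1 \<le> k" "j + k = m" "l < k"
    using j by (auto simp: k_def)
  obtain e where e: "\<chi> (E m) = int p * e" "\<not> int p dvd e"
    using value_eq_p_mult dvd E_in_Uj_le[of m "Suc l"] \<open>\<chi> (E m) \<noteq> 0\<close> \<open>l < m\<close> by force
  have "\<not> int p dvd int j * e"
    using j(3) e(2) prime_p by (simp add: prime_dvd_mult_iff)
  then obtain c where c: "int p dvd \<chi> (E j) div int p + int c * (int j * e)"
    using exists_nat_dvd_add_mult[OF prime_p, where e = 1] by fastforce
  have "int p dvd \<chi> (1 + fps_const (of_nat c) * fps_X ^ k)"
    using dvd k(3) by (simp add: Uj_def)
  then obtain n where "int p ^ 2 dvd \<chi> (1 + fps_const (of_nat c) * fps_X ^ k) + int n * \<chi> (E (j + k))"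
    using exists_nat_square_dvd_add_mult[OF prime_p _ e(2)] e(1) k(2) by metis
  then obtain h n' g where h: "h \<in> Uj k" "\<chi> h = 0" and g: "g \<in> Uj (Suc m)"
    and n': "int p dvd int n' - int j * int c"
    and val: "act (fps_X * h) \<chi> (E j) = (\<chi> (E j) + int n' * \<chi> (E m) + \<chi> g) mod int p ^ 2"
    using exists_kernel_substitution[OF hom j(1) k(1)] k(2) by blast
  define \<psi> where "\<psi> = act (fps_X * h) \<chi>"
  have "int p dvd \<chi> (E j) div int p + int j * int c * e"
    using c by (simp add: ac_simps)
  then have "(\<chi> (E j) + int n' * (int p * e)) mod int p ^ 2 = \<chi> (E j) mod int p"
    using n' prime_gt_0_nat[OF prime_p] by (intro mod_square_add_mult_eq_mod) auto
  then have "\<psi> (E j) = \<chi> (E j) mod int p"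
    unfolding \<psi>_def val using zero g e(1) by simp
  then have "\<psi> (E j) < int p"
    using prime_gt_0_nat[OF prime_p] by simp
  moreover have "\<forall>i\<ge>1. int p dvd \<psi> (E i) - \<chi> (E i)"
    using act_X_mult_E_dvd_diff[OF hom h(1) k(1) _ dvd] k(3) unfolding \<psi>_def by auto
  moreover have "\<forall>i>j. \<psi> (E i) = \<chi> (E i)"
    using act_X_mult_E_eq[OF hom h(1) k(1) _ zero] k(2) j(1) unfolding \<psi>_def by auto
  ultimately show ?thesis
    unfolding \<psi>_def using strictly_equiv_act_X_mult Uj_subset_U1[OF k(1) h(1)] h(2)
      hom_of_type_act[OF type X_mult_in_nottingham] by blast
qed

lemma E_value_dvd_p_step:
  fixes \<chi> :: "'a fps \<Rightarrow> int"
  assumes type: "hom_of_type p l m \<chi>" and "j < l"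
  shows "\<exists>\<psi>. strictly_equiv \<chi> \<psi> \<and> hom_of_type p l m \<psi> \<and> E_value_dvd_p p j \<psi> \<and>
           (\<forall>i>j. E_value_dvd_p p i \<chi> \<longrightarrow> E_value_dvd_p p i \<psi>)"
proof (cases "1 \<le> j \<and> \<not> p dvd j")
  case True
  then obtain \<psi> where \<psi>: "strictly_equiv \<chi> \<psi>" "hom_of_type p l m \<psi>" "int p dvd \<psi> (E j)"
    and diff: "\<forall>i>j. int p dvd \<psi> (E i) - \<chi> (E i)"
    using reduce_residue_step[OF type _ \<open>j < l\<close>] by blast
  have "int p dvd \<psi> (E i)" if "i > j" "int p dvd \<chi> (E i)" for i
    using dvd_add[OF diff[rule_format, OF that(1)] that(2)] by simp
  then show ?thesis
    using \<psi> by (auto simp: E_value_dvd_p_def)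
next
  case False
  have "strictly_equiv \<chi> \<chi>"
    using type U1_hom.strictly_equiv_refl by (auto simp: hom_of_type_def)
  then show ?thesis
    using False type by (auto simp: E_value_dvd_p_def)
qed

lemma E_value_less_p_step:
  fixes \<chi> :: "'a fps \<Rightarrow> int"
  assumes type: "hom_of_type p l m \<chi>" and dvd: "\<forall>i<l. E_value_dvd_p p i \<chi>" and "j < m - l"
  shows "\<exists>\<psi>. strictly_equiv \<chi> \<psi> \<and> (hom_of_type p l m \<psi> \<and> (\<forall>i<l. E_value_dvd_p p i \<psi>)) \<and>
           E_value_less_p p j \<psi> \<and> (\<forall>i>j. E_value_less_p p i \<chi> \<longrightarrow> E_value_less_p p i \<psi>)"
proof (cases "1 \<le> j \<and> \<not> p dvd j")
  case True
  then obtain \<psi> where \<psi>: "strictly_equiv \<chi> \<psi>" "hom_of_type p l m \<psi>" "\<psi> (E j) < int p"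
    and diff: "\<forall>i\<ge>1. int p dvd \<psi> (E i) - \<chi> (E i)" and eq: "\<forall>i>j. \<psi> (E i) = \<chi> (E i)"
    using reduce_quotient_step[OF type _ \<open>j < m - l\<close>] by blast
  have "int p dvd \<psi> (E i)" if "i \<ge> 1" "int p dvd \<chi> (E i)" for i
    using dvd_add[OF diff[rule_format, OF that(1)] that(2)] by simp
  then have "\<forall>i<l. E_value_dvd_p p i \<psi>"
    using dvd by (simp add: E_value_dvd_p_def)
  then show ?thesis
    using \<psi> eq by (auto simp: E_value_less_p_def)
next
  case False
  have "strictly_equiv \<chi> \<chi>"
    using type U1_hom.strictly_equiv_refl by (auto simp: hom_of_type_def)
  then show ?thesis
    using False type dvd by (auto simp: E_value_less_p_def)
qed

lemma exists_reduced:
  fixes \<chi> :: "'a fps \<Rightarrow> int"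
  assumes "hom_of_type p l m \<chi>"
  shows "\<exists>\<psi>. strictly_equiv \<chi> \<psi> \<and> reduced p l m \<psi>"
proof -
  have equiv_refl: "hom_of_type p l m \<phi> \<Longrightarrow> strictly_equiv \<phi> \<phi>" for \<phi> :: "'a fps \<Rightarrow> int"
    using U1_hom.strictly_equiv_refl by (auto simp: hom_of_type_def)
  have equiv_trans: "hom_of_type p l m \<phi> \<Longrightarrow> strictly_equiv \<phi> \<psi> \<Longrightarrow> strictly_equiv \<psi> \<psi>' \<Longrightarrow>
      strictly_equiv \<phi> \<psi>'" for \<phi> \<psi> \<psi>' :: "'a fps \<Rightarrow> int"
    using U1_hom.strictly_equiv_trans by (auto simp: hom_of_type_def)
  have "\<exists>\<psi>. strictly_equiv \<chi> \<psi> \<and> hom_of_type p l m \<psi> \<and> (\<forall>j<l. E_value_dvd_p p j \<psi>)"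
    by (rule descending_normalization[where I = "hom_of_type p l m" and R = strictly_equiv])
      (blast intro: equiv_refl equiv_trans E_value_dvd_p_step assms)+
  then obtain \<psi> where \<psi>: "strictly_equiv \<chi> \<psi>" "hom_of_type p l m \<psi>" "\<forall>j<l. E_value_dvd_p p j \<psi>"
    by blast
  have "\<exists>\<psi>'. strictly_equiv \<psi> \<psi>' \<and> (hom_of_type p l m \<psi>' \<and> (\<forall>j<l. E_value_dvd_p p j \<psi>')) \<and>
      (\<forall>j<m - l. E_value_less_p p j \<psi>')"
    by (rule descending_normalization[where I = "\<lambda>\<psi>. hom_of_type p l m \<psi> \<and> (\<forall>j<l. E_value_dvd_p p j \<psi>)"
          and R = strictly_equiv]) (use \<psi>(2,3) in \<open>blast intro: equiv_refl equiv_trans E_value_less_p_step\<close>)+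
  then show ?thesis
    using equiv_trans[OF assms \<psi>(1)] by (auto simp: reduced_def)
qed

lemma hom_of_type_if_has_type:
  fixes \<chi> :: "'a fps \<Rightarrow> int"
  assumes "is_character p \<chi>" "has_type p \<chi> l m"
  shows "hom_of_type p l m \<chi>"
proof -
  have hom: "U1_hom p \<chi>"
    using assms(1) prime_p by (rule U1_hom_if_is_character[rotated])
  have l: "1 \<le> l" and m: "1 \<le> m"
    and dvd: "\<forall>f\<in>Uj (Suc l). int p dvd \<chi> f" and zero: "\<forall>f\<in>Uj (Suc m). \<chi> f = 0"
    using assms(2) by (auto simp: has_type_def)
  obtain f where f: "f \<in> Uj l" "\<not> int p dvd \<chi> f"
    using assms(2) by (auto simp: has_type_def)
  obtain f' where f': "f' \<in> Uj m" "\<chi> f' \<noteq> 0"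
    using assms(2) by (auto simp: has_type_def)
  have El: "\<not> int p dvd \<chi> (E l)"
  proof
    assume "int p dvd \<chi> (E l)"
    moreover obtain n g where "g \<in> Uj (Suc l)" "\<chi> f = (int n * \<chi> (E l) + \<chi> g) mod int p ^ 2"
      using value_in_Uj[OF hom l f(1)] by blast
    ultimately show False
      using f(2) dvd by (auto simp: dvd_mod_iff)
  qed
  have Em: "\<chi> (E m) \<noteq> 0"
    using value_in_Uj[OF hom m f'(1)] f'(2) zero by auto
  have "l \<le> m"
    using f Uj_antimono[of "Suc m" l] zero by (metis dvd_0_right not_less_eq_eq subsetD)
  moreover have "l \<noteq> m"
  proof
    assume "l = m"
    have "2 * l \<le> p * l"
      using prime_ge_2_nat[OF prime_p] by (rule mult_le_mono1)
    then have "E (p * l) \<in> Uj (Suc m)"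
      using \<open>l = m\<close> l by (intro E_in_Uj_le) linarith+
    then have "int p dvd \<chi> (E l)"
      using zero value_E_power_p[OF hom l] prime_gt_0_nat[OF prime_p]
      by (auto simp: power2_eq_square dvd_eq_mod_eq_0)
    then show False
      using El by simp
  qed
  ultimately show ?thesis
    using hom l dvd zero El Em by (simp add: hom_of_type_def)
qed

lemma hom_of_type_not_dvd_l:
  fixes \<chi> :: "'a fps \<Rightarrow> int"
  assumes "hom_of_type p l m \<chi>"
  shows "\<not> p dvd l"
proof
  assume "p dvd l"
  then obtain l' where l': "l = p * l'" "1 \<le> l'"
    using assms by (auto simp: hom_of_type_def)
  then have "int p dvd \<chi> (E l)"
    using value_E_power_p[of \<chi> l'] assms by (auto simp: hom_of_type_def dvd_mod_iff)
  then show False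
    using assms by (simp add: hom_of_type_def)
qed

text \<open>\<open>E\<^sub>p\<^sub>i = E\<^sub>i\<^sup>p\<close> gives the values on the remaining \<open>E\<^sub>j\<close>, and the \<open>E\<^sub>j\<close> generate \<open>U\<^sub>1/U\<^sub>m\<^sub>+\<^sub>1\<close>.\<close>

lemma U1_hom_E_eq:
  fixes \<chi> \<psi> :: "'a fps \<Rightarrow> int"
  assumes hom: "U1_hom p \<chi>" "U1_hom p \<psi>"
    and zero: "\<forall>f\<in>Uj (Suc m). \<chi> f = 0" "\<forall>f\<in>Uj (Suc m). \<psi> f = 0"
    and E: "\<And>j. 1 \<le> j \<Longrightarrow> j \<le> m \<Longrightarrow> \<not> p dvd j \<Longrightarrow> \<chi> (E j) = \<psi> (E j)"
    and "1 \<le> i"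
  shows "\<chi> (E i) = \<psi> (E i)"
  using \<open>1 \<le> i\<close>
proof (induction i rule: less_induct)
  case (less i)
  consider "m < i" | "i \<le> m" "\<not> p dvd i" | i' where "i = p * i'" "1 \<le> i'"
    using less.prems by (metis dvd_def mult_0_right not_less One_nat_def Suc_leI neq0_conv)
  then show ?case
  proof cases
    case 1
    then show ?thesis
      using zero less.prems E_in_Uj_le[of i "Suc m"] by auto
  next
    case 3
    then have "i' < i"
      using prime_ge_2_nat[OF prime_p] by simp
    then show ?thesis
      using less.IH 3 value_E_power_p[OF hom(1)] value_E_power_p[OF hom(2)] by simp
  qed (use E less.prems in auto)
qed

lemma U1_hom_eqI:
  fixes \<chi> \<psi> :: "'a fps \<Rightarrow> int"
  assumes hom: "U1_hom p \<chi>" "U1_hom p \<psi>"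
    and zero: "\<forall>f\<in>Uj (Suc m). \<chi> f = 0" "\<forall>f\<in>Uj (Suc m). \<psi> f = 0"
    and E: "\<And>j. 1 \<le> j \<Longrightarrow> j \<le> m \<Longrightarrow> \<not> p dvd j \<Longrightarrow> \<chi> (E j) = \<psi> (E j)"
  shows "\<chi> = \<psi>"
proof -
  have "\<forall>f\<in>Uj i. \<chi> f = \<psi> f" if "1 \<le> i" "i \<le> Suc m" for i
    using that(2,1)
  proof (induction i rule: inc_induct)
    case base
    then show ?case using zero by simp
  next
    case (step i)
    show ?case
    proof
      fix f :: "'a fps"
      assume "f \<in> Uj i"
      then obtain n g where g: "g \<in> Uj (Suc i)" "f = E i ^ n * g"
        using Uj_factor_E_power[OF prime_p card_field step.prems] by blast
      then have "g \<in> Uj 1" "\<chi> g = \<psi> g"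
        using step.IH Uj_subset_U1[OF _ g(1)] by auto
      then show "\<chi> f = \<psi> f"
        unfolding g(2) using step.prems U1_hom_E_eq[OF assms]
        by (simp add: U1_hom.E_power_mult[OF hom(1)] U1_hom.E_power_mult[OF hom(2)])
    qed
  qed
  then show ?thesis
    using U1_hom.vanishes_outside[OF hom(1)] U1_hom.vanishes_outside[OF hom(2)] by fastforce
qed

lemma strictly_equiv_if_same_reduced_values:
  fixes \<chi> \<chi>' \<psi> \<psi>' :: "'a fps \<Rightarrow> int"
  assumes "hom_of_type p l m \<chi>" "hom_of_type p l m \<chi>'"
    and "strictly_equiv \<chi> \<psi>" "strictly_equiv \<chi>' \<psi>'" "reduced p l m \<psi>" "reduced p l m \<psi>'"
    and "restrict (\<lambda>j. \<psi> (E j)) {j. 1 \<le> j \<and> j \<le> m \<and> \<not> p dvd j} =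
      restrict (\<lambda>j. \<psi>' (E j)) {j. 1 \<le> j \<and> j \<le> m \<and> \<not> p dvd j}"
  shows "strictly_equiv \<chi> \<chi>'"
proof -
  have "\<psi> (E j) = \<psi>' (E j)" if "1 \<le> j" "j \<le> m" "\<not> p dvd j" for j
    using that fun_cong[OF assms(7), of j] by simp
  then have "\<psi> = \<psi>'"
    using assms(5,6) by (intro U1_hom_eqI) (auto simp: reduced_def hom_of_type_def)
  then show ?thesis
    using assms(1-4) U1_hom.strictly_equiv_trans U1_hom.strictly_equiv_sym
    by (metis hom_of_type_def)
qed

lemma card_strict_classes_le:
  fixes A :: "('a fps \<Rightarrow> int) set"
  assumes type: "\<And>\<chi>. \<chi> \<in> A \<Longrightarrow> hom_of_type p l m \<chi>"
  defines "R \<equiv> {(\<chi>, \<psi>). \<chi> \<in> A \<and> \<psi> \<in> A \<and> strictly_equiv \<chi> \<psi>}"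
    and "J \<equiv> {j. 1 \<le> j \<and> j \<le> m \<and> \<not> p dvd j}"
  shows "finite (A // R) \<and> card (A // R) \<le> card (PiE J (reduced_values p l m))"
proof (rule card_quotient_le_card[where P = "\<lambda>\<chi> s. \<exists>\<psi>. strictly_equiv \<chi> \<psi> \<and> reduced p l m \<psi> \<and>
    s = restrict (\<lambda>j. \<psi> (E j)) J"])
  show "equiv A R"
    unfolding R_def using type by (intro equiv_strictly_equiv) (auto simp: hom_of_type_def)
  show "finite (PiE J (reduced_values p l m))"
    unfolding J_def by (rule finite_reduced_value_vectors)
  show "\<exists>s\<in>PiE J (reduced_values p l m). \<exists>\<psi>. strictly_equiv \<chi> \<psi> \<and> reduced p l m \<psi> \<and>
      s = restrict (\<lambda>j. \<psi> (E j)) J" if "\<chi> \<in> A" for \<chi>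
  proof -
    obtain \<psi> where \<psi>: "strictly_equiv \<chi> \<psi>" "reduced p l m \<psi>"
      using exists_reduced type \<open>\<chi> \<in> A\<close> by blast
    then have "restrict (\<lambda>j. \<psi> (E j)) J \<in> PiE J (reduced_values p l m)"
      unfolding J_def by (auto simp: restrict_PiE_iff intro: reduced_value_in_reduced_values)
    then show ?thesis
      using \<psi> by blast
  qed
  show "(\<chi>, \<chi>') \<in> R" if "\<chi> \<in> A" "\<chi>' \<in> A"
    and "\<exists>\<psi>. strictly_equiv \<chi> \<psi> \<and> reduced p l m \<psi> \<and> s = restrict (\<lambda>j. \<psi> (E j)) J"
    and "\<exists>\<psi>. strictly_equiv \<chi>' \<psi> \<and> reduced p l m \<psi> \<and> s = restrict (\<lambda>j. \<psi> (E j)) J"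
  for \<chi> \<chi>' s
    using that strictly_equiv_if_same_reduced_values[OF type type] unfolding R_def J_def by blast
qed

end

theorem corollary4p3:
  fixes p l m :: nat
  assumes "prime p" and "card (UNIV :: ('a::{field,finite}) set) = p"
  shows "finite (surj_chars_of_type p l m // {(\<chi>, \<psi>). \<chi> \<in> surj_chars_of_type p l m \<and>
             \<psi> \<in> surj_chars_of_type p l m \<and> strictly_equiv (\<chi> :: 'a fps \<Rightarrow> int) \<psi>})
     \<and> card (surj_chars_of_type p l m // {(\<chi>, \<psi>). \<chi> \<in> surj_chars_of_type p l m \<and>
             \<psi> \<in> surj_chars_of_type p l m \<and> strictly_equiv (\<chi> :: 'a fps \<Rightarrow> int) \<psi>})
        \<le> bound_B p l m"
proof (cases "surj_chars_of_type p l m = ({} :: ('a fps \<Rightarrow> int) set)")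
  case False
  have type: "hom_of_type p l m \<chi>" if "\<chi> \<in> surj_chars_of_type p l m" for \<chi> :: "'a fps \<Rightarrow> int"
    using that hom_of_type_if_has_type[OF assms]
    by (auto simp: surj_chars_of_type_def surjective_character_def)
  with False obtain \<chi> :: "'a fps \<Rightarrow> int" where "hom_of_type p l m \<chi>"
    by blast
  then have "1 \<le> l" "l < m" "\<not> p dvd l"
    using hom_of_type_not_dvd_l[OF assms] by (auto simp: hom_of_type_def)
  then show ?thesis
    using card_strict_classes_le[OF assms type] card_reduced_value_vectors_le[OF assms(1)]
    by (meson order_trans)
qed simp

end
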